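(* Consider the multicast coalitional game with player set $\mathcal{N}=\{1,\ldots,N\}$ and value function $$v(S)=\sum_{i\in S}U_i-\sum_{i\in S}\frac{\alpha_i}{R_S}-\frac{\beta+\gamma}{R_S},\qquad R_S=\min_{i\in S}R_i,$$ for nonempty $S\subseteq\mathcal{N}$. Suppose $R_i=R_0$ and $P_{Rx,i}=P_{Rx}$ for all $i\in\mathcal{N}$. Then the core of the game is non-empty.
   Context: A transmitter multicasts a file of size $X>0$ bits to users $\mathcal{N}=\{1,\dots,N\}$. User $i$ has valuation $U_i\in\mathbb{R}$ for the file, downloads from the transmitter at rate $R_i>0$, and consumes receive power $P_{Rx,i}>0$; the transmitter transmits at power $P_{Tx}>0$. Costs per unit energy are $a>0$ at users and $b>0$ at the transmitter, and the bandwidth cost per second is $w>0$. Set $\alpha_i=aP_{Rx,i}X$, $\beta=bP_{Tx}X$, $\gamma=wX$. This defines a transferable-utility coalitional game $(\mathcal{N},v)$ with $v$ as in the claim (coalition $S$ receives the file by multicast at rate $R_S$). The core is the set of payoff vectors $(x_1,\dots,x_N)\in\mathbb{R}^N$ with $\sum_{i\in\mathcal{N}}x_i=v(\mathcal{N})$ and $\sum_{i\in S}x_i\ge v(S)$ for every nonempty $S\subseteq\mathcal{N}$. *)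

theory Defs
  imports Main "HOL.Real"
begin

definition rate_coal :: "(nat \<Rightarrow> real) \<Rightarrow> nat set \<Rightarrow> real" where
  "rate_coal R S = Min (R ` S)"

definition mc_value ::
  "(nat \<Rightarrow> real) \<Rightarrow> (nat \<Rightarrow> real) \<Rightarrow> (nat \<Rightarrow> real) \<Rightarrow> real \<Rightarrow> real \<Rightarrow> nat set \<Rightarrow> real" where
  "mc_value U alpha R beta gamma S =
     (\<Sum>i\<in>S. U i) - (\<Sum>i\<in>S. alpha i / rate_coal R S) - (beta + gamma) / rate_coal R S"

definition core :: "nat set \<Rightarrow> (nat set \<Rightarrow> real) \<Rightarrow> (nat \<Rightarrow> real) set" where
  "core Np v = {x. (\<Sum>i\<in>Np. x i) = v Np \<and>
                   (\<forall>S. S \<subseteq> Np \<and> S \<noteq> {} \<longrightarrow> (\<Sum>i\<in>S. x i) \<ge> v S)}"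

end

theory Submission
  imports Defs
begin

text \<open>With a common rate \<open>R\<^sub>0\<close>, the value of a coalition is additive in its members
  up to the fixed cost \<open>(\<beta> + \<gamma>) / R\<^sub>0\<close> of the transmission itself. For such a game,
  charging every player its own net worth and splitting the fixed cost equally
  among all players lies in the core: a coalition \<open>S\<close> then bears only the share
  \<open>|S| / N \<le> 1\<close> of the fixed cost it would have to pay on its own.\<close>

lemma rate_coal_const:
  assumes "S \<noteq> {}" and "\<forall>i\<in>S. R i = r"
  shows "rate_coal R S = r"
proof -
  have "R ` S = {r}" using assms by auto
  then show ?thesis unfolding rate_coal_def by simp
qed

lemma mc_value_const_rate:
  assumes "S \<noteq> {}" and "\<forall>i\<in>S. R i = r"
  shows "mc_value U alpha R beta gamma S = (\<Sum>i\<in>S. U i - alpha i / r) - (beta + gamma) / r"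
  unfolding mc_value_def rate_coal_const[OF assms] by (simp add: sum_subtractf)

lemma equal_cost_split_in_core:
  fixes f :: "nat \<Rightarrow> real"
  assumes "finite Np" and "Np \<noteq> {}" and "C \<ge> 0"
    and v: "\<And>S. S \<subseteq> Np \<Longrightarrow> S \<noteq> {} \<Longrightarrow> v S = (\<Sum>i\<in>S. f i) - C"
  shows "(\<lambda>i. f i - C / card Np) \<in> core Np v"
proof -
  have card_pos: "card Np > 0" using assms(1,2) by (simp add: card_gt_0_iff)
  have split: "(\<Sum>i\<in>S. f i - C / card Np) = (\<Sum>i\<in>S. f i) - card S * C / card Np" for S
    by (simp add: sum_subtractf)
  have "v S \<le> (\<Sum>i\<in>S. f i - C / card Np)" if "S \<subseteq> Np" "S \<noteq> {}" for S
  proof -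
    have "card S \<le> card Np" using that assms(1) by (simp add: card_mono)
    then have "card S * C / card Np \<le> C"
      using card_pos \<open>C \<ge> 0\<close> by (simp add: divide_le_eq mult.commute mult_left_mono)
    then show ?thesis using v[OF that] split by simp
  qed
  moreover have "(\<Sum>i\<in>Np. f i - C / card Np) = v Np"
    using v[OF order_refl assms(2)] split card_pos by simp
  ultimately show ?thesis unfolding core_def by auto
qed

theorem theorem3:
  fixes N :: nat and X a b w PTx R0 PRx :: real
    and U R P_Rx :: "nat \<Rightarrow> real"
  assumes "N \<ge> 1"
    and "X > 0" and "a > 0" and "b > 0" and "w > 0" and "PTx > 0"
    and "R0 > 0" and "PRx > 0"
    and "\<forall>i\<in>{1..N}. R i = R0"
    and "\<forall>i\<in>{1..N}. P_Rx i = PRx"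
  shows "core {1..N}
           (mc_value U (\<lambda>i. a * P_Rx i * X) R (b * PTx * X) (w * X)) \<noteq> {}"
proof -
  let ?f = "\<lambda>i. U i - a * P_Rx i * X / R0"
  let ?C = "(b * PTx * X + w * X) / R0"
  have "?C \<ge> 0" using assms(2-7) by simp
  moreover have "mc_value U (\<lambda>i. a * P_Rx i * X) R (b * PTx * X) (w * X) S = (\<Sum>i\<in>S. ?f i) - ?C"
    if "S \<subseteq> {1..N}" "S \<noteq> {}" for S
    using that assms(9) by (subst mc_value_const_rate[where r = R0]) auto
  ultimately have "(\<lambda>i. ?f i - ?C / card {1..N})
      \<in> core {1..N} (mc_value U (\<lambda>i. a * P_Rx i * X) R (b * PTx * X) (w * X))"
    using assms(1) by (intro equal_cost_split_in_core) auto
  then show ?thesis by blast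
qed

end
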